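(* If a hypergraph $H$ is degenerate, then its suspension $S(H)$ is degenerate.
   Context: A hypergraph $H=(V,E)$ has finite vertex set $V$ and edge set $E\subseteq 2^V$; $R(H)=\{|F|:F\in E\}$. $H_1\subseteq H_2$ means there is an injective $f\colon V(H_1)\to V(H_2)$ with $f(F)\in E(H_2)$ for all $F\in E(H_1)$. For $G$ on $n$ vertices, $h_n(G)=\sum_{F\in E(G)}1/\binom{n}{|F|}$; $\pi_n(H)=\max\{h_n(G): G\text{ on } n \text{ vertices}, R(G)\subseteq R(H), H\not\subseteq G\}$ and $\pi(H)=\lim_n\pi_n(H)$. $H$ is degenerate if $\pi(H)=|R(H)|-1$. The suspension $S(H)$ has vertex set $V(H)\cup\{\ast\}$ for a new vertex $\ast$ and edge set $\{F\cup\{\ast\}: F\in E(H)\}$. *)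

theory Defs
  imports Complex_Main
begin

type_synonym 'a hgraph = "'a set \<times> 'a set set"

definition hypergraph :: "'a hgraph \<Rightarrow> bool" where
  "hypergraph H \<longleftrightarrow> finite (fst H) \<and> snd H \<subseteq> Pow (fst H)"

definition ranks :: "'a hgraph \<Rightarrow> nat set" where
  "ranks H = card ` snd H"

definition contained :: "'a hgraph \<Rightarrow> 'b hgraph \<Rightarrow> bool" where
  "contained H1 H2 \<longleftrightarrow> (\<exists>f. inj_on f (fst H1) \<and> f ` fst H1 \<subseteq> fst H2 \<and>
      (\<forall>F\<in>snd H1. f ` F \<in> snd H2))"

definition hdens :: "nat \<Rightarrow> 'a hgraph \<Rightarrow> real" where
  "hdens n G = (\<Sum>F\<in>snd G. 1 / real (n choose card F))"

text \<open>Hypergraphs on n vertices are taken (up to isomorphism) with vertex set {0..<n}.\<close>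
definition pi_n :: "'a hgraph \<Rightarrow> nat \<Rightarrow> real" where
  "pi_n H n = Max {hdens n ({0..<n}, E) | E. E \<subseteq> Pow {0..<n} \<and>
      ranks ({0..<n}, E) \<subseteq> ranks H \<and> \<not> contained H ({0..<n::nat}, E)}"

definition degenerate :: "'a hgraph \<Rightarrow> bool" where
  "degenerate H \<longleftrightarrow> (\<lambda>n. pi_n H n) \<longlonglongrightarrow> real (card (ranks H)) - 1"

definition suspension :: "'a hgraph \<Rightarrow> 'a option hgraph" where
  "suspension H = (insert None (Some ` fst H), (\<lambda>F. insert None (Some ` F)) ` snd H)"

end

theory Submission
  imports Defs
begin

text \<open>
  The link of a vertex v in an S(H)-free graph G on n vertices (the edges through v, with v
  removed) is an H-free graph on n - 1 vertices, and double counting vertex-edge incidences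
  shows that h_n(G) is the average of the densities h_{n-1} of the n links.  Hence
  \<pi>_n(S(H)) \<le> \<pi>_{n-1}(H).  Conversely, taking all sets whose sizes lie in R(S(H)) except one
  rank gives an S(H)-free graph of density |R(S(H))| - 1 = |R(H)| - 1, so \<pi>_n(S(H)) is
  squeezed between this constant and \<pi>_{n-1}(H), which tends to it.
\<close>

definition admissible :: "'a hgraph \<Rightarrow> nat \<Rightarrow> nat set set set" where
  "admissible H n = {E. E \<subseteq> Pow {0..<n} \<and> ranks ({0..<n}, E) \<subseteq> ranks H \<and>
      \<not> contained H ({0..<n}, E)}"

lemma pi_n_eq_Max_admissible:
  "pi_n H n = Max ((\<lambda>E. hdens n ({0..<n}, E)) ` admissible H n)"
  unfolding pi_n_def admissible_def by (rule arg_cong[where f = Max]) blast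

lemma finite_admissible: "finite (admissible H n)"
  by (rule finite_subset[of _ "Pow (Pow {0..<n})"]) (auto simp: admissible_def)

lemma hdens_le_pi_n: "E \<in> admissible H n \<Longrightarrow> hdens n ({0..<n}, E) \<le> pi_n H n"
  unfolding pi_n_eq_Max_admissible by (simp add: finite_admissible)

lemma pi_n_le:
  assumes "admissible H n \<noteq> {}" and "\<And>E. E \<in> admissible H n \<Longrightarrow> hdens n ({0..<n}, E) \<le> c"
  shows "pi_n H n \<le> c"
  unfolding pi_n_eq_Max_admissible using assms by (simp add: finite_admissible)

lemma empty_admissible:
  assumes "snd H \<noteq> {}" shows "{} \<in> admissible H n"
  using assms by (auto simp: admissible_def ranks_def contained_def)

lemma admissible_no_edges:
  assumes "finite (fst H)" and "snd H = {}" and "card (fst H) \<le> n"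
  shows "admissible H n = {}"
proof -
  obtain h where "bij_betw h (fst H) {0..<card (fst H)}"
    using ex_bij_betw_finite_nat[OF assms(1)] by blast
  then have "contained H ({0..<n}, E)" for E
    using assms(2,3) unfolding contained_def bij_betw_def by (intro exI[of _ h]) auto
  then show ?thesis by (simp add: admissible_def)
qed

lemma contained_trans:
  assumes "contained H G" and "contained G K" shows "contained H K"
proof -
  obtain f where f: "inj_on f (fst H)" "f ` fst H \<subseteq> fst G" "\<forall>F\<in>snd H. f ` F \<in> snd G"
    using assms(1) unfolding contained_def by blast
  obtain g where g: "inj_on g (fst G)" "g ` fst G \<subseteq> fst K" "\<forall>F\<in>snd G. g ` F \<in> snd K"
    using assms(2) unfolding contained_def by blast
  have "inj_on (g \<circ> f) (fst H)" using f g by (blast intro: comp_inj_on inj_on_subset)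
  moreover have "(g \<circ> f) ` F \<in> snd K" if "F \<in> snd H" for F
    using f(3) g(3) that by (metis image_comp)
  ultimately show ?thesis unfolding contained_def using f(2) g(2) by (intro exI[of _ "g \<circ> f"]) auto
qed

lemma contained_inv_image:
  assumes "inj_on g V" and "E \<subseteq> Pow V"
  shows "contained (g ` V, image g ` E) (V, E)"
  unfolding contained_def fst_conv snd_conv
proof (intro exI[of _ "inv_into V g"] conjI ballI)
  show "inj_on (inv_into V g) (g ` V)" by (rule inj_on_inv_into) simp
  show "inv_into V g ` g ` V \<subseteq> V" by (auto intro: inv_into_into)
  fix F assume "F \<in> image g ` E"
  then obtain F' where "F' \<in> E" "F = g ` F'" by blast
  then show "inv_into V g ` F \<in> E" using assms inv_into_image_cancel by fastforce
qed

lemma hdens_layers: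
  assumes "finite K" and "\<forall>k\<in>K. k \<le> n"
  shows "hdens n ({0..<n}, {F. F \<subseteq> {0..<n} \<and> card F \<in> K}) = real (card K)"
proof -
  let ?E = "{F. F \<subseteq> {0..<n} \<and> card F \<in> K}"
  have "finite ?E" by (rule finite_subset[of _ "Pow {0..<n}"]) auto
  then have "hdens n ({0..<n}, ?E) =
      (\<Sum>k\<in>K. \<Sum>F\<in>{F \<in> ?E. card F = k}. 1 / real (n choose card F))"
    unfolding hdens_def snd_conv by (rule sum.group[symmetric, OF _ assms(1)]) auto
  also have "\<dots> = (\<Sum>k\<in>K. 1)"
  proof (rule sum.cong)
    fix k assume k: "k \<in> K"
    then have "k \<le> n" using assms(2) by blast
    from k have "{F \<in> ?E. card F = k} = {F. F \<subseteq> {0..<n} \<and> card F = k}" by auto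
    then show "(\<Sum>F\<in>{F \<in> ?E. card F = k}. 1 / real (n choose card F)) = 1"
      using n_subsets[of "{0..<n}" k] \<open>k \<le> n\<close> by simp
  qed simp
  finally show ?thesis by simp
qed

lemma finite_ranks: "hypergraph G \<Longrightarrow> finite (ranks G)"
  unfolding hypergraph_def ranks_def by (metis finite_Pow_iff finite_imageI finite_subset)

lemma pi_n_ge_card_ranks_minus_one:
  assumes "hypergraph G" and "r \<in> ranks G" and "card (fst G) \<le> n"
  shows "real (card (ranks G)) - 1 \<le> pi_n G n"
proof -
  define K where "K = ranks G - {r}"
  define E where "E = {F. F \<subseteq> {0..<n} \<and> card F \<in> K}"
  have fin: "finite (fst G)" "\<forall>F\<in>snd G. F \<subseteq> fst G"
    using assms(1) unfolding hypergraph_def by auto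
  have "finite (ranks G)" using assms(1) by (rule finite_ranks)
  have "\<forall>k\<in>K. k \<le> n"
    using fin assms(3) unfolding K_def ranks_def by (metis DiffD1 card_mono imageE le_trans)
  \<comment> \<open>no copy of an r-edge of G fits into E\<close>
  have "\<not> contained G ({0..<n}, E)"
  proof
    assume "contained G ({0..<n}, E)"
    then obtain f where f: "inj_on f (fst G)" "\<forall>F\<in>snd G. f ` F \<in> E"
      unfolding contained_def by auto
    obtain X where X: "X \<in> snd G" "card X = r" using assms(2) unfolding ranks_def by auto
    then have "card (f ` X) = r" using f(1) fin(2) by (metis card_image inj_on_subset)
    then show False using f(2) X(1) unfolding E_def K_def by auto
  qed
  then have "E \<in> admissible G n" unfolding admissible_def E_def K_def ranks_def by auto
  then have "hdens n ({0..<n}, E) \<le> pi_n G n" by (rule hdens_le_pi_n)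
  moreover have "hdens n ({0..<n}, E) = real (card (ranks G)) - 1"
  proof -
    have "card (ranks G) > 0" using \<open>finite (ranks G)\<close> assms(2) by (auto simp: card_gt_0_iff)
    then show ?thesis
      unfolding E_def using hdens_layers[OF _ \<open>\<forall>k\<in>K. k \<le> n\<close>] \<open>finite (ranks G)\<close> assms(2)
      by (simp add: K_def card_Diff_singleton of_nat_diff)
  qed
  ultimately show ?thesis by simp
qed

lemma card_suspension_edge: "finite F \<Longrightarrow> card (insert None (Some ` F)) = Suc (card F)"
  by (simp add: card_image)

lemma ranks_suspension:
  assumes "hypergraph H" shows "ranks (suspension H) = Suc ` ranks H"
proof -
  have "finite F" if "F \<in> snd H" for F
    using assms that unfolding hypergraph_def by (auto intro: finite_subset)
  then show ?thesis
    unfolding ranks_def suspension_def snd_conv image_image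
    by (intro image_cong refl) (simp add: card_suspension_edge card_image)
qed

lemma card_ranks_suspension: "hypergraph H \<Longrightarrow> card (ranks (suspension H)) = card (ranks H)"
  by (simp add: ranks_suspension card_image)

lemma hypergraph_suspension: "hypergraph H \<Longrightarrow> hypergraph (suspension H)"
  unfolding hypergraph_def suspension_def by auto

lemma card_vertices_suspension:
  "hypergraph H \<Longrightarrow> card (fst (suspension H)) = Suc (card (fst H))"
  unfolding hypergraph_def suspension_def by (simp add: card_suspension_edge card_image)

definition link :: "'b \<Rightarrow> 'b set set \<Rightarrow> 'b set set" where
  "link v E = (\<lambda>F. F - {v}) ` {F \<in> E. v \<in> F}"

lemma contained_suspension_if_contained_link:
  assumes "contained H (V - {v}, link v E)" and "v \<in> V"
  shows "contained (suspension H) (V, E)"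
proof -
  obtain f where f: "inj_on f (fst H)" "f ` fst H \<subseteq> V - {v}" "\<forall>F\<in>snd H. f ` F \<in> link v E"
    using assms(1) unfolding contained_def by auto
  let ?g = "case_option v f"
  have "inj_on ?g (insert None (Some ` fst H))"
    using f(1,2) by (auto simp: inj_on_def)
  moreover have "?g ` insert None (Some ` F) \<in> E" if "F \<in> snd H" for F
  proof -
    have "f ` F \<in> link v E" using f(3) that by blast
    then obtain G where "G \<in> E" "v \<in> G" "f ` F = G - {v}"
      unfolding link_def by auto
    moreover have "?g ` insert None (Some ` F) = insert v (f ` F)" by (auto simp: image_image)
    ultimately show ?thesis by (simp add: insert_absorb)
  qed
  ultimately show ?thesis
    unfolding contained_def suspension_def using f(2) assms(2) by (intro exI[of _ ?g]) auto
qed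

definition squeeze :: "nat \<Rightarrow> nat \<Rightarrow> nat" where
  "squeeze v x = (if x < v then x else x - 1)"

lemma inj_on_squeeze: "inj_on (squeeze v) (- {v})"
  unfolding squeeze_def inj_on_def by auto

lemma squeeze_image: "v < n \<Longrightarrow> squeeze v ` ({0..<n} - {v}) = {0..<n - 1}"
proof (intro equalityI subsetI)
  fix y assume "v < n" "y \<in> {0..<n - 1}"
  then have "y = squeeze v (if y < v then y else Suc y)" "(if y < v then y else Suc y) \<in> {0..<n} - {v}"
    by (auto simp: squeeze_def)
  then show "y \<in> squeeze v ` ({0..<n} - {v})" by blast
qed (auto simp: squeeze_def)

lemma card_squeeze_link_edge:
  assumes "finite F" and "v \<in> F" shows "card (squeeze v ` (F - {v})) = card F - 1"
  using assms inj_on_subset[OF inj_on_squeeze] by (simp add: card_image subset_eq)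

definition std_link :: "nat \<Rightarrow> nat set set \<Rightarrow> nat set set" where
  "std_link v E = image (squeeze v) ` link v E"

lemma link_subset_Pow: "E \<subseteq> Pow V \<Longrightarrow> link v E \<subseteq> Pow (V - {v})"
  unfolding link_def by auto

lemma contained_link_if_contained_std_link:
  assumes "E \<subseteq> Pow {0..<n}" and "v < n" and "contained H ({0..<n - 1}, std_link v E)"
  shows "contained H ({0..<n} - {v}, link v E)"
proof -
  have "inj_on (squeeze v) ({0..<n} - {v})"
    by (rule inj_on_subset[OF inj_on_squeeze]) auto
  then have "contained ({0..<n - 1}, std_link v E) ({0..<n} - {v}, link v E)"
    using contained_inv_image[OF _ link_subset_Pow[OF assms(1)]]
    unfolding std_link_def squeeze_image[OF assms(2), symmetric] by blast
  with assms(3) show ?thesis by (rule contained_trans)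
qed

lemma hdens_std_link:
  assumes "E \<subseteq> Pow {0..<n}"
  shows "hdens (n - 1) ({0..<n - 1}, std_link v E) =
    (\<Sum>F\<in>{F \<in> E. v \<in> F}. 1 / real ((n - 1) choose (card F - 1)))"
proof -
  have "inj_on (image (squeeze v)) (link v E)"
    by (rule inj_on_subset[OF inj_on_image_Pow[OF inj_on_squeeze]]) (auto simp: link_def)
  moreover have "inj_on (\<lambda>F. F - {v}) {F \<in> E. v \<in> F}"
    by (rule inj_onI) (metis (no_types, lifting) insert_Diff mem_Collect_eq)
  moreover have "finite F" if "F \<in> E" for F
    using assms that by (auto intro: finite_subset)
  ultimately show ?thesis
    unfolding hdens_def std_link_def link_def snd_conv
    by (simp add: sum.reindex card_squeeze_link_edge)
qed

lemma binomial_ratio: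
  assumes "0 < k" and "k \<le> n"
  shows "real k / real ((n - 1) choose (k - 1)) = real n / real (n choose k)"
proof -
  have "real k * real (n choose k) = real n * real ((n - 1) choose (k - 1))"
    using times_binomial_minus1_eq[OF assms(1), of n] by (metis of_nat_mult)
  moreover have "(n choose k) > 0" "((n - 1) choose (k - 1)) > 0" using assms by simp_all
  ultimately show ?thesis by (simp add: field_simps)
qed

text \<open>Double counting of vertex-edge incidences.\<close>
lemma hdens_eq_average_std_link:
  assumes E: "E \<subseteq> Pow {0..<n}" and "{} \<notin> E" and "0 < n"
  shows "hdens n ({0..<n}, E) = (\<Sum>v<n. hdens (n - 1) ({0..<n - 1}, std_link v E)) / real n"
proof -
  let ?c = "\<lambda>F. 1 / real ((n - 1) choose (card F - 1))"
  have "finite E" using E by (rule finite_subset) simp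
  have "(\<Sum>v<n. hdens (n - 1) ({0..<n - 1}, std_link v E)) = (\<Sum>v<n. \<Sum>F\<in>{F \<in> E. v \<in> F}. ?c F)"
    using hdens_std_link[OF E] by simp
  also have "\<dots> = (\<Sum>F\<in>E. \<Sum>v\<in>{v. v < n \<and> v \<in> F}. ?c F)"
    using sum.swap_restrict[of "{..<n}" E "\<lambda>v F. ?c F" "\<lambda>v F. v \<in> F"] \<open>finite E\<close> by simp
  also have "\<dots> = (\<Sum>F\<in>E. real n / real (n choose card F))"
  proof (rule sum.cong)
    fix F assume "F \<in> E"
    then have "F \<subseteq> {0..<n}" "F \<noteq> {}" using assms by auto
    moreover from this have "{v. v < n \<and> v \<in> F} = F" "finite F" by (auto intro: finite_subset)
    ultimately show "(\<Sum>v\<in>{v. v < n \<and> v \<in> F}. ?c F) = real n / real (n choose card F)"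
      using binomial_ratio[of "card F" n] card_mono[of "{0..<n}" F] by (simp add: card_gt_0_iff)
  qed simp
  finally show ?thesis using \<open>0 < n\<close> by (simp add: hdens_def sum_divide_distrib)
qed

lemma std_link_admissible:
  assumes "hypergraph H" and "E \<in> admissible (suspension H) n" and "v < n"
  shows "std_link v E \<in> admissible H (n - 1)"
proof -
  have E: "E \<subseteq> Pow {0..<n}" and rk: "card ` E \<subseteq> Suc ` ranks H"
    and nc: "\<not> contained (suspension H) ({0..<n}, E)"
    using assms(2) unfolding admissible_def ranks_suspension[OF assms(1)] by (auto simp: ranks_def)
  have "std_link v E \<subseteq> Pow {0..<n - 1}"
    using link_subset_Pow[OF E, of v] squeeze_image[OF assms(3)] unfolding std_link_def by blast
  moreover have "ranks ({0..<n - 1}, std_link v E) \<subseteq> ranks H"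
  proof
    fix k assume "k \<in> ranks ({0..<n - 1}, std_link v E)"
    then obtain F where F: "F \<in> E" "v \<in> F" "k = card (squeeze v ` (F - {v}))"
      unfolding ranks_def std_link_def link_def by auto
    moreover have "finite F" using E F(1) by (auto intro: finite_subset)
    ultimately show "k \<in> ranks H" using rk card_squeeze_link_edge by fastforce
  qed
  moreover have "\<not> contained H ({0..<n - 1}, std_link v E)"
  proof
    assume "contained H ({0..<n - 1}, std_link v E)"
    then have "contained H ({0..<n} - {v}, link v E)"
      by (rule contained_link_if_contained_std_link[OF E assms(3)])
    then have "contained (suspension H) ({0..<n}, E)"
      by (rule contained_suspension_if_contained_link) (use assms(3) in simp)
    with nc show False by contradiction
  qed
  ultimately show ?thesis by (simp add: admissible_def)
qed

lemma pi_n_suspension_le: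
  assumes "hypergraph H" and "snd H \<noteq> {}" and "0 < n"
  shows "pi_n (suspension H) n \<le> pi_n H (n - 1)"
proof (rule pi_n_le)
  show "admissible (suspension H) n \<noteq> {}"
    using empty_admissible[of "suspension H"] assms(2) by (auto simp: suspension_def)
next
  fix E assume adm: "E \<in> admissible (suspension H) n"
  then have "E \<subseteq> Pow {0..<n}" by (simp add: admissible_def)
  moreover have "{} \<notin> E"
    using adm unfolding admissible_def ranks_suspension[OF assms(1)] by (auto simp: ranks_def)
  ultimately have "hdens n ({0..<n}, E) = (\<Sum>v<n. hdens (n - 1) ({0..<n - 1}, std_link v E)) / real n"
    using assms(3) by (rule hdens_eq_average_std_link)
  also have "\<dots> \<le> (\<Sum>v<n. pi_n H (n - 1)) / real n"
    using hdens_le_pi_n[OF std_link_admissible[OF assms(1) adm]]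
    by (intro divide_right_mono sum_mono) auto
  also have "\<dots> = pi_n H (n - 1)" using assms(3) by simp
  finally show "hdens n ({0..<n}, E) \<le> pi_n H (n - 1)" .
qed

lemma pi_n_suspension_no_edges:
  assumes "hypergraph H" and "snd H = {}" and "Suc (card (fst H)) \<le> n"
  shows "pi_n (suspension H) n = pi_n H n"
proof -
  have "admissible H n = {}"
    using assms unfolding hypergraph_def by (intro admissible_no_edges) auto
  moreover have "admissible (suspension H) n = {}"
    using assms hypergraph_suspension[OF assms(1)] card_vertices_suspension[OF assms(1)]
    by (intro admissible_no_edges) (auto simp: hypergraph_def suspension_def)
  ultimately show ?thesis by (simp add: pi_n_eq_Max_admissible)
qed

theorem mainTheorem18:
  fixes H :: "'a hgraph"
  assumes "hypergraph H" and "degenerate H"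
  shows "degenerate (suspension H)"
proof (cases "snd H = {}")
  case True
  then have "ranks (suspension H) = ranks H" by (simp add: ranks_def suspension_def)
  moreover have "\<forall>\<^sub>F n in sequentially. pi_n (suspension H) n = pi_n H n"
    using eventually_ge_at_top pi_n_suspension_no_edges[OF assms(1) True] by (rule eventually_mono)
  ultimately show ?thesis using assms(2) tendsto_cong unfolding degenerate_def by metis
next
  case False
  then obtain r where r: "Suc r \<in> ranks (suspension H)"
    using ranks_suspension[OF assms(1)] by (auto simp: ranks_def)
  let ?d = "real (card (ranks H)) - 1"
  have "?d \<le> pi_n (suspension H) (Suc n)" if "card (fst H) \<le> n" for n
    using pi_n_ge_card_ranks_minus_one[OF hypergraph_suspension[OF assms(1)] r] that
    by (simp add: card_ranks_suspension card_vertices_suspension assms(1))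
  then have "\<forall>\<^sub>F n in sequentially. ?d \<le> pi_n (suspension H) (Suc n)"
    unfolding eventually_sequentially by blast
  moreover have "\<forall>\<^sub>F n in sequentially. pi_n (suspension H) (Suc n) \<le> pi_n H n"
    using pi_n_suspension_le[OF assms(1) False, of "Suc n" for n] by simp
  ultimately have "(\<lambda>n. pi_n (suspension H) (Suc n)) \<longlonglongrightarrow> ?d"
    using tendsto_const assms(2)[unfolded degenerate_def] by (rule real_tendsto_sandwich)
  then show ?thesis
    unfolding degenerate_def card_ranks_suspension[OF assms(1)] by (rule LIMSEQ_imp_Suc)
qed

end
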